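(* Let $\mathbb{X}$ be a real Banach space such that $\operatorname{Sm}\mathbb{X}$ is a dense $G_\delta$ subset of $\mathbb{X}$. If a bounded linear operator $T:\mathbb{X}\to\mathbb{X}$ preserves Birkhoff–James orthogonality at each point of $\operatorname{Sm}\mathbb{X}$, then $T$ is a scalar multiple of an isometry, i.e. there is $\lambda\ge0$ with $\|Tx\|=\lambda\|x\|$ for all $x\in\mathbb{X}$. (Equivalently, $\operatorname{Sm}\mathbb{X}\cap S_{\mathbb{X}}$ is a $\mathcal{K}$-set.)
   Context: $u\perp_B v$ means $\|u+\lambda v\|\ge\|u\|$ for all real $\lambda$. $T$ preserves Birkhoff–James orthogonality at $x$ if $x\perp_B v$ implies $Tx\perp_B Tv$ for all $v$. For non-zero $z$, $J(z)=\{f\in\mathbb{X}^*:\|f\|=1,\ f(z)=\|z\|\}$; $z$ is smooth if $J(z)$ is a singleton; $\operatorname{Sm}\mathbb{X}$ is the set of smooth points. $S_{\mathbb{X}}$ is the unit sphere. A set $A\subseteq S_{\mathbb{X}}$ is a $\mathcal{K}$-set if every bounded linear $T:\mathbb{X}\to\mathbb{X}$ preserving Birkhoff–James orthogonality at each point of $A$ is a scalar multiple of an isometry. *)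

theory Defs
  imports "HOL-Analysis.Analysis"
begin

definition bj_orth :: "'a::real_normed_vector \<Rightarrow> 'a \<Rightarrow> bool" where
  "bj_orth u v \<longleftrightarrow> (\<forall>c::real. norm (u + c *\<^sub>R v) \<ge> norm u)"

definition preserves_bj_at :: "('a::real_normed_vector \<Rightarrow> 'b::real_normed_vector) \<Rightarrow> 'a \<Rightarrow> bool" where
  "preserves_bj_at T x \<longleftrightarrow> (\<forall>v. bj_orth x v \<longrightarrow> bj_orth (T x) (T v))"

definition supp_funcs :: "'a::real_normed_vector \<Rightarrow> ('a \<Rightarrow> real) set" where
  "supp_funcs z = {f. bounded_linear f \<and> onorm f = 1 \<and> f z = norm z}"

definition smooth_point :: "'a::real_normed_vector \<Rightarrow> bool" where
  "smooth_point z \<longleftrightarrow> z \<noteq> 0 \<and> (\<exists>f. supp_funcs z = {f})"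

definition smooth_points :: "'a::real_normed_vector set" where
  "smooth_points = {z. smooth_point z}"

end

theory Submission
  imports Defs
begin

(* Every vector in the kernel of a supporting functional f at x is BJ-orthogonal to x, so
   preservation at x gives norm (T x) * |f z| <= norm x * norm (T z).  Hence the ratio
   r x = norm (T x) / norm x is almost monotone: r x - r y <= (onorm T / c) * (norm y - f y)
   whenever norm y >= c.  Walking from a to b in n equal steps through nearby smooth points,
   the defects norm y - f y telescope to O(norm (b - a) / n + n * delta), so density gives
   r a <= r b whenever 0 is not on [a, b]; with homogeneity, r is constant on nonzero vectors. *)

definition norm_ratio :: "('a::real_normed_vector \<Rightarrow> 'b::real_normed_vector) \<Rightarrow> 'a \<Rightarrow> real" where
  "norm_ratio T x = norm (T x) / norm x"

lemma norm_ratio_nonneg: "0 \<le> norm_ratio T x"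
  unfolding norm_ratio_def by simp

lemma norm_ratio_le_onorm:
  assumes "bounded_linear T"
  shows "norm_ratio T x \<le> onorm T"
  using onorm[OF assms, of x] onorm_pos_le[OF assms]
  by (cases "x = 0") (simp_all add: norm_ratio_def divide_le_eq mult.commute)

lemma norm_ratio_scaleR:
  assumes "bounded_linear T" and "k \<noteq> 0"
  shows "norm_ratio T (k *\<^sub>R x) = norm_ratio T x"
  using assms by (simp add: norm_ratio_def linear_simps)

lemma isCont_norm_ratio:
  assumes "bounded_linear T" and "x \<noteq> 0"
  shows "isCont (norm_ratio T) x"
proof -
  have "isCont T x" using assms(1) by (rule linear_continuous_at)
  then show ?thesis
    using assms(2) unfolding norm_ratio_def[abs_def] by (intro continuous_intros) auto
qed

lemma supp_func_abs_le:
  assumes "f \<in> supp_funcs x"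
  shows "\<bar>f z\<bar> \<le> norm z"
  using assms onorm[of f z] unfolding supp_funcs_def by simp

lemma bj_orth_if_supp_func_eq_0:
  assumes f: "f \<in> supp_funcs x" and "f w = 0"
  shows "bj_orth x w"
  unfolding bj_orth_def
proof
  fix c :: real
  interpret bounded_linear f using f by (simp add: supp_funcs_def)
  have "norm x = f (x + c *\<^sub>R w)"
    using f \<open>f w = 0\<close> by (simp add: add scale supp_funcs_def)
  also have "\<dots> \<le> norm (x + c *\<^sub>R w)"
    using supp_func_abs_le[OF f] abs_le_D1 by blast
  finally show "norm x \<le> norm (x + c *\<^sub>R w)" .
qed

lemma bj_orth_norm_scaleR_le:
  assumes "bj_orth u v"
  shows "\<bar>s\<bar> * norm u \<le> norm (s *\<^sub>R u + v)"
proof (cases "s = 0")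
  case False
  have "s *\<^sub>R u + v = s *\<^sub>R (u + (1 / s) *\<^sub>R v)"
    using False by (simp add: scaleR_add_right)
  then show ?thesis
    using assms False by (simp add: bj_orth_def mult_left_mono)
qed simp

lemma preserves_bj_at_supp_func_bound:
  assumes T: "bounded_linear T" and pres: "preserves_bj_at T x" and f: "f \<in> supp_funcs x"
  shows "norm (T x) * \<bar>f z\<bar> \<le> norm x * norm (T z)"
proof (cases "x = 0")
  case True
  then show ?thesis using T by (simp add: linear_simps)
next
  case False
  interpret f: bounded_linear f using f by (simp add: supp_funcs_def)
  interpret T: bounded_linear T by (rule T)
  define s where "s = f z / norm x"
  define w where "w = z - s *\<^sub>R x"
  have "f w = 0"
    using False f by (simp add: w_def s_def f.diff f.scale supp_funcs_def)
  then have "bj_orth (T x) (T w)"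
    using bj_orth_if_supp_func_eq_0[OF f] pres by (simp add: preserves_bj_at_def)
  moreover have "T z = s *\<^sub>R T x + T w"
    by (simp add: w_def T.diff T.scale)
  ultimately have "\<bar>s\<bar> * norm (T x) \<le> norm (T z)"
    using bj_orth_norm_scaleR_le by metis
  then have "norm x * (\<bar>s\<bar> * norm (T x)) \<le> norm x * norm (T z)"
    by (simp add: mult_left_mono)
  then show ?thesis
    using False by (simp add: s_def abs_div mult_ac)
qed

lemma norm_ratio_diff_le_supp_func_defect:
  assumes T: "bounded_linear T" and pres: "preserves_bj_at T x" and f: "f \<in> supp_funcs x"
    and c: "0 < c" "c \<le> norm y"
  shows "norm_ratio T x - norm_ratio T y \<le> onorm T / c * (norm y - f y)"
proof -
  have y: "0 < norm y" using c by linarith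
  have defect: "0 \<le> norm y - f y"
    using supp_func_abs_le[OF f, of y] by linarith
  have "norm_ratio T x * f y \<le> norm (T y)"
  proof (cases "x = 0")
    case False
    have "f y * norm (T x) \<le> \<bar>f y\<bar> * norm (T x)"
      by (simp add: mult_right_mono)
    also have "\<dots> \<le> norm x * norm (T y)"
      using preserves_bj_at_supp_func_bound[OF T pres f, of y] by (simp add: mult.commute)
    finally show ?thesis
      using False by (simp add: norm_ratio_def field_simps)
  qed (simp add: norm_ratio_def)
  then have "norm_ratio T x * norm y - norm (T y) \<le> norm_ratio T x * (norm y - f y)"
    by (simp add: right_diff_distrib)
  then have "norm_ratio T x - norm_ratio T y \<le> norm_ratio T x * (norm y - f y) / norm y"
    using y by (simp add: norm_ratio_def[of T y] field_simps)
  also have "\<dots> \<le> onorm T * (norm y - f y) / c"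
    using norm_ratio_le_onorm[OF T] defect c onorm_pos_le[OF T]
    by (intro frac_le mult_right_mono) auto
  finally show ?thesis by simp
qed

lemma supp_func_defect_le:
  assumes f: "f \<in> supp_funcs x" and g: "g \<in> supp_funcs y"
  shows "norm y - f y \<le> g h - f h + 2 * norm (y - x - h)"
proof -
  interpret f: bounded_linear f using f by (simp add: supp_funcs_def)
  interpret g: bounded_linear g using g by (simp add: supp_funcs_def)
  define d where "d = y - x - h"
  have "norm y - f y \<le> g y - g x - f y + f x"
    using f g supp_func_abs_le[OF g, of x] by (simp add: supp_funcs_def)
  also have "\<dots> = g h - f h + g d - f d"
    by (simp add: d_def f.diff g.diff)
  also have "\<dots> \<le> g h - f h + 2 * norm d"
    using supp_func_abs_le[OF f, of d] supp_func_abs_le[OF g, of d] by linarith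
  finally show ?thesis by (simp add: d_def)
qed

lemma norm_ratio_chain_bound:
  fixes xs :: "nat \<Rightarrow> 'a::real_normed_vector" and f :: "nat \<Rightarrow> 'a \<Rightarrow> real"
  assumes T: "bounded_linear T" and c: "0 < c"
    and pts: "\<And>i. i \<le> n \<Longrightarrow>
      preserves_bj_at T (xs i) \<and> f i \<in> supp_funcs (xs i) \<and> c \<le> norm (xs i)"
    and steps: "\<And>i. i < n \<Longrightarrow> norm (xs (Suc i) - xs i - h) \<le> e"
  shows "norm_ratio T (xs 0) - norm_ratio T (xs n) \<le> onorm T / c * (2 * norm h + 2 * real n * e)"
proof -
  let ?K = "onorm T / c"
  have K: "0 \<le> ?K" using onorm_pos_le[OF T] c by simp
  have "norm_ratio T (xs 0) - norm_ratio T (xs n)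
      = (\<Sum>i<n. norm_ratio T (xs i) - norm_ratio T (xs (Suc i)))"
    by (rule sum_lessThan_telescope'[symmetric])
  also have "\<dots> \<le> (\<Sum>i<n. ?K * (norm (xs (Suc i)) - f i (xs (Suc i))))"
    using norm_ratio_diff_le_supp_func_defect[OF T _ _ c] pts by (intro sum_mono) auto
  also have "\<dots> \<le> (\<Sum>i<n. ?K * (f (Suc i) h - f i h + 2 * e))"
  proof (intro sum_mono mult_left_mono K)
    fix i assume "i \<in> {..<n}"
    then show "norm (xs (Suc i)) - f i (xs (Suc i)) \<le> f (Suc i) h - f i h + 2 * e"
      using supp_func_defect_le[of "f i" "xs i" "f (Suc i)" "xs (Suc i)" h] pts steps
      by fastforce
  qed
  also have "\<dots> = ?K * (\<Sum>i<n. f (Suc i) h - f i h + 2 * e)"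
    by (rule sum_distrib_left[symmetric])
  also have "\<dots> = ?K * (f n h - f 0 h + 2 * real n * e)"
    using sum_lessThan_telescope[of "\<lambda>i. f i h" n] by (simp add: sum.distrib)
  also have "\<dots> \<le> ?K * (2 * norm h + 2 * real n * e)"
    using supp_func_abs_le[of "f 0" "xs 0" h] supp_func_abs_le[of "f n" "xs n" h] pts
    by (intro mult_left_mono K) fastforce+
  finally show ?thesis .
qed

text \<open>Sample the segment at n+1 equally spaced points and replace each by a nearby
  point of S; consecutive differences then stay within 2\<delta> of (b - a) / n.\<close>
lemma perturbed_endpoints_norm_ratio_bound:
  assumes T: "bounded_linear T"
    and S: "closure S = UNIV" "\<And>x. x \<in> S \<Longrightarrow> preserves_bj_at T x \<and> supp_funcs x \<noteq> {}"
    and c: "0 < c" and \<delta>: "0 < \<delta>" and seg: "\<And>p. p \<in> closed_segment a b \<Longrightarrow> c + \<delta> \<le> norm p"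
    and n: "0 < (n::nat)"
  obtains x0 xn where "dist x0 a < \<delta>" "dist xn b < \<delta>"
    "norm_ratio T x0 - norm_ratio T xn \<le> onorm T / c * (2 * norm (b - a) / real n + 4 * real n * \<delta>)"
proof -
  define h where "h = (1 / real n) *\<^sub>R (b - a)"
  define p where "p i = a + real i *\<^sub>R h" for i
  have "\<forall>i. \<exists>y. y \<in> S \<and> dist y (p i) < \<delta>"
    using S(1) \<delta> closure_approachable by blast
  then obtain xs where xs: "\<And>i. xs i \<in> S \<and> dist (xs i) (p i) < \<delta>"
    by metis
  have "\<forall>i. \<exists>g. g \<in> supp_funcs (xs i)"
    using xs S(2) by blast
  then obtain f where f: "\<And>i. f i \<in> supp_funcs (xs i)"
    by metis
  have "p i \<in> closed_segment a b" if "i \<le> n" for i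
  proof -
    have "p i = (1 - real i / n) *\<^sub>R a + (real i / n) *\<^sub>R b"
      by (simp add: p_def h_def algebra_simps)
    then show ?thesis
      using that n unfolding in_segment by (intro exI[of _ "real i / n"]) auto
  qed
  then have "c \<le> norm (xs i)" if "i \<le> n" for i
    using seg[of "p i"] xs[of i] norm_triangle_ineq2[of "p i" "xs i"] that
    by (simp add: dist_norm norm_minus_commute)
  moreover have "norm (xs (Suc i) - xs i - h) \<le> 2 * \<delta>" for i
  proof -
    have "xs (Suc i) - xs i - h = (xs (Suc i) - p (Suc i)) - (xs i - p i)"
      by (simp add: p_def algebra_simps)
    then have "norm (xs (Suc i) - xs i - h) \<le> norm (xs (Suc i) - p (Suc i)) + norm (xs i - p i)"
      by (metis norm_triangle_ineq4)
    then show ?thesis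
      using xs[of i] xs[of "Suc i"] by (simp add: dist_norm)
  qed
  ultimately have "norm_ratio T (xs 0) - norm_ratio T (xs n)
      \<le> onorm T / c * (2 * norm h + 2 * real n * (2 * \<delta>))"
    using xs S(2) f by (intro norm_ratio_chain_bound[OF T c]) auto
  moreover have "p 0 = a" "p n = b"
    using n by (simp_all add: p_def h_def)
  ultimately show ?thesis
    using that[of "xs 0" "xs n"] xs[of 0] xs[of n] by (simp add: h_def mult.assoc)
qed

lemma mesh_and_perturbation_small:
  fixes K L \<epsilon> r :: real
  assumes K: "0 \<le> K" and \<epsilon>: "0 < \<epsilon>" and r: "0 < r"
  obtains n :: nat and \<delta> where "0 < n" "0 < \<delta>" "\<delta> \<le> r"
    "K * (2 * L / real n + 4 * real n * \<delta>) < 2 * \<epsilon>"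
proof -
  obtain n :: nat where n: "max 0 (2 * K * L / \<epsilon>) < real n"
    using reals_Archimedean2 by blast
  then have "0 < n" by simp
  have mesh: "K * (2 * L / real n) < \<epsilon>"
    using n \<epsilon> \<open>0 < n\<close> by (simp add: field_simps)
  define A where "A = 4 * K * real n"
  have A: "0 \<le> A" using K by (simp add: A_def)
  define \<delta> where "\<delta> = min r (\<epsilon> / (A + 1))"
  have \<delta>: "0 < \<delta>" using r \<epsilon> A by (simp add: \<delta>_def add_nonneg_pos)
  have "A * \<delta> \<le> A * (\<epsilon> / (A + 1))"
    using A by (intro mult_left_mono) (simp_all add: \<delta>_def)
  also have "\<dots> < \<epsilon>"
    using A \<epsilon> by (simp add: field_simps)
  finally have "K * (4 * real n * \<delta>) < \<epsilon>"
    by (simp add: A_def mult_ac)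
  with mesh have "K * (2 * L / real n + 4 * real n * \<delta>) < 2 * \<epsilon>"
    by (simp add: distrib_left)
  moreover have "\<delta> \<le> r" by (simp add: \<delta>_def)
  ultimately show ?thesis
    using that \<open>0 < n\<close> \<delta> by blast
qed

lemma norm_ratio_mono_on_segment:
  assumes T: "bounded_linear T"
    and S: "closure S = UNIV" "\<And>x. x \<in> S \<Longrightarrow> preserves_bj_at T x \<and> supp_funcs x \<noteq> {}"
    and seg: "0 \<notin> closed_segment a b"
  shows "norm_ratio T a \<le> norm_ratio T b"
proof (rule field_le_epsilon)
  fix e :: real assume "0 < e"
  define \<epsilon> where "\<epsilon> = e / 4"
  have \<epsilon>: "0 < \<epsilon>" using \<open>0 < e\<close> by (simp add: \<epsilon>_def)
  define c where "c = infdist 0 (closed_segment a b) / 2"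
  have c: "0 < c"
    using infdist_pos_not_in_closed[OF closed_segment _ seg] by (simp add: c_def)
  have c_le: "c + c \<le> norm p" if "p \<in> closed_segment a b" for p
    using infdist_le[OF that, of 0] by (simp add: c_def)
  define K where "K = onorm T / c"
  have K: "0 \<le> K" using onorm_pos_le[OF T] c by (simp add: K_def)
  have "a \<noteq> 0" "b \<noteq> 0" using seg ends_in_segment by metis+
  then obtain \<eta>a \<eta>b where "0 < \<eta>a" "0 < \<eta>b"
    and \<eta>a: "\<forall>y. dist y a < \<eta>a \<longrightarrow> dist (norm_ratio T y) (norm_ratio T a) < \<epsilon>"
    and \<eta>b: "\<forall>y. dist y b < \<eta>b \<longrightarrow> dist (norm_ratio T y) (norm_ratio T b) < \<epsilon>"
    using isCont_norm_ratio[OF T] \<epsilon> unfolding continuous_at_eps_delta by metis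
  obtain n \<delta> where "0 < n" "0 < \<delta>" "\<delta> \<le> min c (min \<eta>a \<eta>b)"
    and small: "K * (2 * norm (b - a) / real n + 4 * real n * \<delta>) < 2 * \<epsilon>"
    using mesh_and_perturbation_small[OF K \<epsilon>, of "min c (min \<eta>a \<eta>b)" "norm (b - a)"]
      c \<open>0 < \<eta>a\<close> \<open>0 < \<eta>b\<close> by auto
  have seg_norm: "c + \<delta> \<le> norm p" if "p \<in> closed_segment a b" for p
    using c_le[OF that] \<open>\<delta> \<le> min c (min \<eta>a \<eta>b)\<close> by simp
  obtain x0 xn where "dist x0 a < \<delta>" "dist xn b < \<delta>"
    and chain: "norm_ratio T x0 - norm_ratio T xn
      \<le> onorm T / c * (2 * norm (b - a) / real n + 4 * real n * \<delta>)"
    by (rule perturbed_endpoints_norm_ratio_bound[OF T S c \<open>0 < \<delta>\<close> seg_norm \<open>0 < n\<close>])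
  then have "\<bar>norm_ratio T x0 - norm_ratio T a\<bar> < \<epsilon>" "\<bar>norm_ratio T xn - norm_ratio T b\<bar> < \<epsilon>"
    using \<eta>a \<eta>b \<open>\<delta> \<le> min c (min \<eta>a \<eta>b)\<close> by (simp_all add: dist_real_def)
  moreover have "e = 4 * \<epsilon>" by (simp add: \<epsilon>_def)
  ultimately show "norm_ratio T a \<le> norm_ratio T b + e"
    using chain[folded K_def] small by linarith
qed

lemma norm_ratio_eq_if_nonzero:
  assumes T: "bounded_linear T"
    and S: "closure S = UNIV" "\<And>x. x \<in> S \<Longrightarrow> preserves_bj_at T x \<and> supp_funcs x \<noteq> {}"
    and "x \<noteq> 0" "y \<noteq> 0"
  shows "norm_ratio T x = norm_ratio T y"
proof (cases "0 \<in> closed_segment x y")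
  case True
  then obtain u where u: "0 \<le> u" "u \<le> 1" "(1 - u) *\<^sub>R x + u *\<^sub>R y = 0"
    unfolding in_segment by auto
  then have "u \<noteq> 0" "u \<noteq> 1" using assms(4,5) by auto
  moreover have "u *\<^sub>R y = (u - 1) *\<^sub>R x"
    using u(3) by (simp add: eq_neg_iff_add_eq_0 algebra_simps)
  then have "y = ((u - 1) / u) *\<^sub>R x"
    using \<open>u \<noteq> 0\<close> by (metis divide_inverse_commute scaleR_scaleR scaleR_left_commute
        field_class.field_inverse scaleR_one)
  ultimately show ?thesis
    using norm_ratio_scaleR[OF T] by simp
next
  case False
  then show ?thesis
    using norm_ratio_mono_on_segment[OF T S] closed_segment_commute by (metis order_antisym)
qed

theorem mainTheorem6:
  fixes T :: "'a::banach \<Rightarrow> 'a"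
  assumes dense: "closure (smooth_points :: 'a set) = UNIV"
    and gd: "gdelta (smooth_points :: 'a set)"
    and lin: "bounded_linear T"
    and pres: "\<forall>x\<in>smooth_points. preserves_bj_at T x"
  shows "\<exists>c::real. c \<ge> 0 \<and> (\<forall>x. norm (T x) = c * norm x)"
proof -
  have smooth: "preserves_bj_at T x \<and> supp_funcs x \<noteq> {}" if "x \<in> smooth_points" for x
    using that pres by (auto simp: smooth_points_def smooth_point_def)
  define e :: 'a where "e = (SOME x. x \<noteq> 0)"
  have "norm (T x) = norm_ratio T e * norm x" for x
  proof (cases "x = 0")
    case True
    then show ?thesis using lin by (simp add: linear_simps)
  next
    case False
    then have "e \<noteq> 0" unfolding e_def by (rule someI)
    then have "norm_ratio T x = norm_ratio T e"
      using norm_ratio_eq_if_nonzero[OF lin dense smooth \<open>x \<noteq> 0\<close>] by blast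
    moreover have "norm (T x) = norm_ratio T x * norm x"
      using False by (simp add: norm_ratio_def)
    ultimately show ?thesis by simp
  qed
  then show ?thesis
    using norm_ratio_nonneg by blast
qed

end
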